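(* Let $N\ge1$, let $-1=x_0<x_1<\cdots<x_N<1$ be Gauss–Radau points, let $\{l_j\}_{j=0}^N\subset\mathbb{P}_N$ be the Lagrange basis polynomials at these points, and let $B_0(x)=1$, $B_j(x)=\int_{-1}^xL_j(t)\,dt$ ($1\le j\le N$), where $L_j(x)=\frac{Q_N(x)}{(x-x_j)Q_N'(x_j)}$, $Q_N(x)=\prod_{i=1}^N(x-x_i)$; thus $B_j(-1)=0$, $B_j'(x_i)=\delta_{ij}$ for $1\le i,j\le N$. Set $b_{ij}=B_j(x_i)$, $d_{ij}=l_j'(x_i)$ and $\mathbf B=(b_{ij})_{0\le i,j\le N}$, $\mathbf B_{\rm in}=(b_{ij})_{1\le i,j\le N}$, $\mathbf D=(d_{ij})_{0\le i,j\le N}$, $\mathbf D_{\rm in}=(d_{ij})_{1\le i,j\le N}$. Let $\widetilde{\mathbf D}$ be obtained from $\mathbf D$ by replacing its first row by $(1,0,\dots,0)$. Then $$\mathbf D_{\rm in}\mathbf B_{\rm in}=\mathbf I_N,\qquad \widetilde{\mathbf D}\,\mathbf B=\mathbf I_{N+1}.$$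
   Context: Gauss–Radau points: Legendre–Gauss–Radau points (zeros of $P_N+P_{N+1}$, $P_k$ the Legendre polynomials) or Chebyshev–Gauss–Radau points $x_j=-\cos(2j\pi/(2N+1))$. $\mathbb{P}_N$ is the space of polynomials of degree at most $N$; $\mathbf I_M$ is the $M\times M$ identity matrix. *)

theory Defs
  imports "HOL-Analysis.Analysis" "HOL-Computational_Algebra.Polynomial" "Jordan_Normal_Form.Matrix"
begin

fun legendre :: "nat \<Rightarrow> real poly" where
  "legendre 0 = 1"
| "legendre (Suc 0) = [:0, 1:]"
| "legendre (Suc (Suc n)) =
     Polynomial.smult (1 / real (n + 2))
       (Polynomial.smult (real (2 * n + 3)) ([:0, 1:] * legendre (Suc n)) - Polynomial.smult (real (n + 1)) (legendre n))"

definition legendre_gauss_radau :: "nat \<Rightarrow> (nat \<Rightarrow> real) \<Rightarrow> bool" where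
  "legendre_gauss_radau N x \<longleftrightarrow>
     strict_mono_on {0..N} x \<and>
     x ` {0..N} = {t. poly (legendre N + legendre (Suc N)) t = 0}"

definition chebyshev_gauss_radau :: "nat \<Rightarrow> (nat \<Rightarrow> real) \<Rightarrow> bool" where
  "chebyshev_gauss_radau N x \<longleftrightarrow>
     (\<forall>j\<le>N. x j = - cos (2 * real j * pi / (2 * real N + 1)))"

definition gauss_radau :: "nat \<Rightarrow> (nat \<Rightarrow> real) \<Rightarrow> bool" where
  "gauss_radau N x \<longleftrightarrow> legendre_gauss_radau N x \<or> chebyshev_gauss_radau N x"

definition lagrange_basis :: "nat \<Rightarrow> (nat \<Rightarrow> real) \<Rightarrow> nat \<Rightarrow> real poly" where
  "lagrange_basis N x j =
     Polynomial.smult (1 / (\<Prod>k\<in>{0..N} - {j}. (x j - x k))) (\<Prod>k\<in>{0..N} - {j}. [:- x k, 1:])"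

definition QN :: "nat \<Rightarrow> (nat \<Rightarrow> real) \<Rightarrow> real poly" where
  "QN N x = (\<Prod>i\<in>{1..N}. [:- x i, 1:])"

definition LL :: "nat \<Rightarrow> (nat \<Rightarrow> real) \<Rightarrow> nat \<Rightarrow> real \<Rightarrow> real" where
  "LL N x j t = poly (QN N x) t / ((t - x j) * poly (pderiv (QN N x)) (x j))"

definition BB :: "nat \<Rightarrow> (nat \<Rightarrow> real) \<Rightarrow> nat \<Rightarrow> real \<Rightarrow> real" where
  "BB N x j t = (if j = 0 then 1 else integral {-1..t} (LL N x j))"

definition bcoef :: "nat \<Rightarrow> (nat \<Rightarrow> real) \<Rightarrow> nat \<Rightarrow> nat \<Rightarrow> real" where
  "bcoef N x i j = BB N x j (x i)"

definition dcoef :: "nat \<Rightarrow> (nat \<Rightarrow> real) \<Rightarrow> nat \<Rightarrow> nat \<Rightarrow> real" where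
  "dcoef N x i j = poly (pderiv (lagrange_basis N x j)) (x i)"

definition Bmat :: "nat \<Rightarrow> (nat \<Rightarrow> real) \<Rightarrow> real mat" where
  "Bmat N x = mat (N + 1) (N + 1) (\<lambda>(i, j). bcoef N x i j)"

definition Bin :: "nat \<Rightarrow> (nat \<Rightarrow> real) \<Rightarrow> real mat" where
  "Bin N x = mat N N (\<lambda>(i, j). bcoef N x (i + 1) (j + 1))"

definition Dmat :: "nat \<Rightarrow> (nat \<Rightarrow> real) \<Rightarrow> real mat" where
  "Dmat N x = mat (N + 1) (N + 1) (\<lambda>(i, j). dcoef N x i j)"

definition Din :: "nat \<Rightarrow> (nat \<Rightarrow> real) \<Rightarrow> real mat" where
  "Din N x = mat N N (\<lambda>(i, j). dcoef N x (i + 1) (j + 1))"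

definition Dtilde :: "nat \<Rightarrow> (nat \<Rightarrow> real) \<Rightarrow> real mat" where
  "Dtilde N x = mat (N + 1) (N + 1)
     (\<lambda>(i, j). if i = 0 then (if j = 0 then 1 else 0) else Dmat N x $$ (i, j))"

end

theory Submission
  imports Defs
begin

text \<open>
  On \<open>[-1, \<infinity>)\<close> each \<open>B\<^sub>k\<close> is a polynomial of degree at most \<open>N\<close>, so Lagrange
  interpolation at the \<open>N + 1\<close> nodes gives \<open>B\<^sub>k = \<Sum>\<^sub>j b\<^sub>j\<^sub>k l\<^sub>j\<close>; differentiating at \<open>x\<^sub>i\<close>
  yields \<open>\<Sum>\<^sub>j d\<^sub>i\<^sub>j b\<^sub>j\<^sub>k = B\<^sub>k'(x\<^sub>i) = \<delta>\<^sub>i\<^sub>k\<close> for \<open>1 \<le> i \<le> N\<close>. Since \<open>x\<^sub>0 = -1\<close>, the first row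
  of \<open>B\<close> is \<open>(1, 0, \<dots>, 0)\<close>: this is what the modified first row of \<open>D\<close> picks out, and it
  makes the \<open>j = 0\<close> term vanish in the interior products.
\<close>

lemma pderiv_sum: "pderiv (sum f A) = (\<Sum>a\<in>A. pderiv (f a))"
  using higher_pderiv_sum[of 1 f A] by simp

definition poly_antideriv :: "'a::field_char_0 poly \<Rightarrow> 'a poly" where
  "poly_antideriv p = (\<Sum>i\<le>degree p. monom (coeff p i / of_nat (Suc i)) (Suc i))"

lemma pderiv_poly_antideriv: "pderiv (poly_antideriv p) = p"
proof -
  have "pderiv (poly_antideriv p) = (\<Sum>i\<le>degree p. monom (coeff p i) i)"
    by (simp add: poly_antideriv_def pderiv_sum pderiv_monom del: of_nat_Suc)
  also have "\<dots> = p" by (rule poly_as_sum_of_monoms)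
  finally show ?thesis .
qed

lemma degree_poly_antideriv_le: "degree (poly_antideriv p) \<le> degree p + 1"
  unfolding poly_antideriv_def
  by (intro degree_sum_le) (auto intro: order.trans[OF degree_monom_le])

lemma degree_prod_linear_le:
  fixes c :: "'b \<Rightarrow> 'a::idom"
  assumes "finite A"
  shows "degree (\<Prod>k\<in>A. [:- c k, 1:]) \<le> card A"
  using degree_prod_sum_le[OF assms, of "\<lambda>k. [:- c k, 1:]"] by simp

lemma poly_lagrange_basis_node:
  assumes "inj_on x {0..N}" "i \<le> N" "j \<le> N"
  shows "poly (lagrange_basis N x j) (x i) = (if i = j then 1 else 0)"
proof (cases "i = j")
  case True
  have "(\<Prod>k\<in>{0..N} - {j}. x j - x k) \<noteq> 0"
    using assms by (auto simp: inj_on_def)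
  then show ?thesis using True by (simp add: lagrange_basis_def poly_prod)
next
  case False
  have "(\<Prod>k\<in>{0..N} - {j}. poly [:- x k, 1:] (x i)) = 0"
    by (rule prod_zero) (use False assms in auto)
  then show ?thesis using False by (simp add: lagrange_basis_def poly_prod)
qed

lemma degree_lagrange_basis_le:
  assumes "j \<le> N"
  shows "degree (lagrange_basis N x j) \<le> N"
proof -
  have "degree (\<Prod>k\<in>{0..N} - {j}. [:- x k, 1:]) \<le> N"
    using degree_prod_linear_le[of "{0..N} - {j}" x] assms by simp
  then show ?thesis
    unfolding lagrange_basis_def using Polynomial.degree_smult_le order.trans by blast
qed

lemma lagrange_interpolation:
  assumes inj: "inj_on x {0..N}" and deg: "degree p \<le> N"
  shows "p = (\<Sum>j\<in>{0..N}. Polynomial.smult (poly p (x j)) (lagrange_basis N x j))"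
proof (rule poly_eqI_degree[where A = "x ` {0..N}"])
  fix t assume "t \<in> x ` {0..N}"
  then obtain i where i: "i \<le> N" "t = x i" by auto
  have "poly (\<Sum>j\<in>{0..N}. Polynomial.smult (poly p (x j)) (lagrange_basis N x j)) (x i)
      = (\<Sum>j\<in>{0..N}. poly p (x j) * (if i = j then 1 else 0))"
    by (simp add: poly_sum poly_lagrange_basis_node[OF inj i(1)])
  also have "\<dots> = poly p (x i)"
    using i by (simp add: if_distrib sum.delta cong: if_cong)
  finally show "poly p t = poly (\<Sum>j\<in>{0..N}. Polynomial.smult (poly p (x j)) (lagrange_basis N x j)) t"
    using i by simp
next
  have card: "card (x ` {0..N}) = N + 1" using inj by (simp add: card_image)
  show "degree p < card (x ` {0..N})" using card deg by simp
  show "degree (\<Sum>j\<in>{0..N}. Polynomial.smult (poly p (x j)) (lagrange_basis N x j)) < card (x ` {0..N})"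
    unfolding card
    by (rule le_imp_less_Suc[unfolded Suc_eq_plus1], rule degree_sum_le)
       (auto intro: order.trans[OF Polynomial.degree_smult_le] degree_lagrange_basis_le)
qed

lemma poly_pderiv_node_eq_sum_dcoef:
  assumes "inj_on x {0..N}" "degree p \<le> N"
  shows "poly (pderiv p) (x i) = (\<Sum>j\<in>{0..N}. dcoef N x i j * poly p (x j))"
  by (subst lagrange_interpolation[OF assms])
     (simp add: pderiv_sum pderiv_smult poly_sum dcoef_def mult.commute)

definition Lpoly :: "nat \<Rightarrow> (nat \<Rightarrow> real) \<Rightarrow> nat \<Rightarrow> real poly" where
  "Lpoly N x k = Polynomial.smult (1 / poly (pderiv (QN N x)) (x k)) (\<Prod>i\<in>{1..N} - {k}. [:- x i, 1:])"

lemma QN_remove: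
  assumes "k \<in> {1..N}"
  shows "QN N x = [:- x k, 1:] * (\<Prod>i\<in>{1..N} - {k}. [:- x i, 1:])"
  unfolding QN_def using assms by (simp add: prod.remove)

lemma poly_pderiv_QN_node:
  assumes "k \<in> {1..N}"
  shows "poly (pderiv (QN N x)) (x k) = (\<Prod>i\<in>{1..N} - {k}. x k - x i)"
proof -
  have "pderiv [:- x k, 1:] = 1" by (simp add: pderiv_pCons)
  then show ?thesis
    by (subst QN_remove[OF assms]) (simp only: pderiv_mult, simp add: poly_prod)
qed

lemma LL_eq_poly_Lpoly:
  assumes "k \<in> {1..N}" "t \<noteq> x k"
  shows "LL N x k t = poly (Lpoly N x k) t"
proof -
  have "poly (QN N x) t = (t - x k) * poly (\<Prod>i\<in>{1..N} - {k}. [:- x i, 1:]) t"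
    by (subst QN_remove[OF assms(1)]) (simp add: algebra_simps)
  then show ?thesis using assms(2) by (simp add: LL_def Lpoly_def)
qed

lemma poly_Lpoly_node:
  assumes inj: "inj_on x {0..N}" and i: "i \<in> {1..N}" and k: "k \<in> {1..N}"
  shows "poly (Lpoly N x k) (x i) = (if i = k then 1 else 0)"
proof (cases "i = k")
  case True
  have "(\<Prod>j\<in>{1..N} - {k}. x k - x j) \<noteq> 0"
    using inj k by (auto simp: inj_on_def)
  then show ?thesis using True by (simp add: Lpoly_def poly_pderiv_QN_node[OF k] poly_prod)
next
  case False
  have "(\<Prod>j\<in>{1..N} - {k}. poly [:- x j, 1:] (x i)) = 0"
    by (rule prod_zero) (use False i in auto)
  then show ?thesis using False by (simp add: Lpoly_def poly_prod)
qed

lemma degree_Lpoly_le: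
  assumes "k \<in> {1..N}"
  shows "degree (Lpoly N x k) \<le> N - 1"
proof -
  have "degree (\<Prod>i\<in>{1..N} - {k}. [:- x i, 1:]) \<le> N - 1"
    using degree_prod_linear_le[of "{1..N} - {k}" x] assms by simp
  then show ?thesis
    unfolding Lpoly_def using Polynomial.degree_smult_le order.trans by blast
qed

definition Bpoly :: "nat \<Rightarrow> (nat \<Rightarrow> real) \<Rightarrow> nat \<Rightarrow> real poly" where
  "Bpoly N x k =
     (if k = 0 then 1
      else poly_antideriv (Lpoly N x k) - [:poly (poly_antideriv (Lpoly N x k)) (-1):])"

lemma BB_eq_poly_Bpoly:
  assumes k: "k \<in> {1..N}" and t: "-1 \<le> t"
  shows "BB N x k t = poly (Bpoly N x k) t"
proof -
  define P where "P = poly_antideriv (Lpoly N x k)"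
  have "integral {-1..t} (LL N x k) = integral {-1..t} (poly (Lpoly N x k))"
    by (rule integral_spike[where S = "{x k}"]) (auto simp: LL_eq_poly_Lpoly[OF k])
  also have "\<dots> = poly P t - poly P (-1)"
  proof (rule integral_unique, rule fundamental_theorem_of_calculus[OF t])
    fix s
    have "(poly P has_real_derivative poly (Lpoly N x k) s) (at s)"
      using poly_DERIV[of P s] by (simp add: P_def pderiv_poly_antideriv)
    then show "(poly P has_vector_derivative poly (Lpoly N x k) s) (at s within {-1..t})"
      by (auto intro: has_vector_derivative_at_within
               simp: has_real_derivative_iff_has_vector_derivative)
  qed
  finally show ?thesis using k by (simp add: BB_def Bpoly_def P_def)
qed

lemma degree_Bpoly_le:
  assumes "k \<le> N"
  shows "degree (Bpoly N x k) \<le> N"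
proof (cases "k = 0")
  case False
  then have "degree (poly_antideriv (Lpoly N x k)) \<le> N"
    using degree_poly_antideriv_le[of "Lpoly N x k"] degree_Lpoly_le[of k N x] assms by auto
  then show ?thesis
    using False unfolding Bpoly_def by (auto intro: order.trans[OF degree_diff_le_max])
qed (simp add: Bpoly_def)

lemma poly_pderiv_Bpoly_node:
  assumes "inj_on x {0..N}" "i \<in> {1..N}" "k \<le> N"
  shows "poly (pderiv (Bpoly N x k)) (x i) = (if i = k then 1 else 0)"
proof (cases "k = 0")
  case False
  then show ?thesis
    using assms poly_Lpoly_node[OF assms(1,2), of k]
    by (simp add: Bpoly_def pderiv_diff pderiv_poly_antideriv)
qed (use assms in \<open>simp add: Bpoly_def\<close>)

lemma bcoef_eq_poly_Bpoly:
  assumes "k \<le> N" "-1 \<le> x j"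
  shows "bcoef N x j k = poly (Bpoly N x k) (x j)"
  using assms BB_eq_poly_Bpoly[of k N "x j" x]
  by (cases "k = 0") (simp_all add: bcoef_def BB_def Bpoly_def)

lemma bcoef_first_row:
  assumes "x 0 = -1"
  shows "bcoef N x 0 k = (if k = 0 then 1 else 0)"
  using assms by (simp add: bcoef_def BB_def)

lemma sum_dcoef_bcoef:
  assumes inj: "inj_on x {0..N}" and ge: "\<And>j. j \<le> N \<Longrightarrow> -1 \<le> x j"
    and i: "i \<in> {1..N}" and k: "k \<le> N"
  shows "(\<Sum>j\<in>{0..N}. dcoef N x i j * bcoef N x j k) = (if i = k then 1 else 0)"
proof -
  have "(\<Sum>j\<in>{0..N}. dcoef N x i j * bcoef N x j k)
      = (\<Sum>j\<in>{0..N}. dcoef N x i j * poly (Bpoly N x k) (x j))"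
    using k ge by (intro sum.cong) (auto simp: bcoef_eq_poly_Bpoly)
  also have "\<dots> = poly (pderiv (Bpoly N x k)) (x i)"
    by (rule poly_pderiv_node_eq_sum_dcoef[OF inj degree_Bpoly_le[OF k], symmetric])
  also have "\<dots> = (if i = k then 1 else 0)"
    by (rule poly_pderiv_Bpoly_node[OF inj i k])
  finally show ?thesis .
qed

lemma Din_Bin:
  assumes inj: "inj_on x {0..N}" and ge: "\<And>j. j \<le> N \<Longrightarrow> -1 \<le> x j" and x0: "x 0 = -1"
  shows "Din N x * Bin N x = 1\<^sub>m N"
proof (rule eq_matI)
  fix i k assume "i < dim_row (1\<^sub>m N)" "k < dim_col (1\<^sub>m N)"
  then have ik: "i < N" "k < N" by auto
  have "(Din N x * Bin N x) $$ (i, k)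
      = (\<Sum>j\<in>{0..<N}. dcoef N x (i + 1) (j + 1) * bcoef N x (j + 1) (k + 1))"
    using ik by (simp add: Din_def Bin_def scalar_prod_def)
  also have "\<dots> = (\<Sum>j\<in>{1..N}. dcoef N x (i + 1) j * bcoef N x j (k + 1))"
    by (rule sum.reindex_bij_witness[where i = "\<lambda>j. j - 1" and j = "\<lambda>j. j + 1"]) auto
  also have "\<dots> = (\<Sum>j\<in>{0..N}. dcoef N x (i + 1) j * bcoef N x j (k + 1))"
    using bcoef_first_row[of x N, OF x0] by (simp add: sum.atLeast_Suc_atMost[of 0 N])
  also have "\<dots> = 1\<^sub>m N $$ (i, k)"
    using sum_dcoef_bcoef[OF inj ge, of "i + 1" "k + 1"] ik by simp
  finally show "(Din N x * Bin N x) $$ (i, k) = 1\<^sub>m N $$ (i, k)" .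
qed (simp_all add: Din_def Bin_def)

lemma Dtilde_Bmat:
  assumes inj: "inj_on x {0..N}" and ge: "\<And>j. j \<le> N \<Longrightarrow> -1 \<le> x j" and x0: "x 0 = -1"
  shows "Dtilde N x * Bmat N x = 1\<^sub>m (N + 1)"
proof (rule eq_matI)
  fix i k assume "i < dim_row (1\<^sub>m (N + 1))" "k < dim_col (1\<^sub>m (N + 1))"
  then have ik: "i \<le> N" "k \<le> N" by auto
  have "(Dtilde N x * Bmat N x) $$ (i, k)
      = (\<Sum>j\<in>{0..N}. Dtilde N x $$ (i, j) * bcoef N x j k)"
    using ik by (simp add: Dtilde_def Bmat_def scalar_prod_def atLeastLessThanSuc_atLeastAtMost)
  also have "\<dots> = 1\<^sub>m (N + 1) $$ (i, k)"
  proof (cases "i = 0")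
    case True
    then have "(\<Sum>j\<in>{0..N}. Dtilde N x $$ (i, j) * bcoef N x j k)
        = (\<Sum>j\<in>{0..N}. if j = 0 then bcoef N x 0 k else 0)"
      using ik by (intro sum.cong) (auto simp: Dtilde_def)
    then show ?thesis
      using True ik bcoef_first_row[of x N, OF x0] by simp
  next
    case False
    then have "(\<Sum>j\<in>{0..N}. Dtilde N x $$ (i, j) * bcoef N x j k)
        = (\<Sum>j\<in>{0..N}. dcoef N x i j * bcoef N x j k)"
      using ik by (intro sum.cong) (auto simp: Dtilde_def Dmat_def)
    then show ?thesis
      using sum_dcoef_bcoef[OF inj ge, of i k] False ik by simp
  qed
  finally show "(Dtilde N x * Bmat N x) $$ (i, k) = 1\<^sub>m (N + 1) $$ (i, k)" .
qed (simp_all add: Dtilde_def Bmat_def)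

theorem theorem4p1:
  fixes N :: nat and x :: "nat \<Rightarrow> real"
  assumes "N \<ge> 1"
    and "x 0 = -1"
    and "\<And>i j. i < j \<Longrightarrow> j \<le> N \<Longrightarrow> x i < x j"
    and "x N < 1"
    and "gauss_radau N x"
  shows "Din N x * Bin N x = 1\<^sub>m N \<and> Dtilde N x * Bmat N x = 1\<^sub>m (N + 1)"
proof -
  have "inj_on x {0..N}"
  proof (rule inj_onI)
    fix a b assume "a \<in> {0..N}" "b \<in> {0..N}" "x a = x b"
    then show "a = b"
      using assms(3)[of a b] assms(3)[of b a] by (cases a b rule: linorder_cases) auto
  qed
  moreover have "-1 \<le> x j" if "j \<le> N" for j
    using assms(2) assms(3)[of 0 j] that by (cases "j = 0") auto
  ultimately show ?thesis
    using Din_Bin Dtilde_Bmat assms(2) by blast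
qed

end
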